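(* In the setup below, let $H\le\mathrm{SL}(P/Z)$, let $\varphi:H\to P$ be a map with $\varphi(hk)=\varphi(h)\,{}^h\varphi(k)$ for all $h,k\in H$, and let $S=\{\varphi(h)h : h\in H\}\le G$. Then $$N_P(S)=C_P(S)\le C_P(H)=N_P(H).$$
   Context: Setup: $p$ is an odd prime, $E$ is an extraspecial group of order $p^3$ and exponent $p$, $i\ge1$, and $P=E\circ C_{p^i}$ is the central product amalgamating $Z(E)$ with the subgroup of order $p$ of $C_{p^i}$; $Z:=Z(P)=C_{p^i}$. $\mathrm{SL}(P/Z)\cong\mathrm{SL}_2(\mathbb F_p)$ acts on $P$ by automorphisms fixing $Z$ pointwise and inducing the natural action on $P/Z\cong\mathbb F_p^2$ (with respect to a basis $\bar f_1,\bar f_2$, $f_1,f_2\in E$, the generators acting by $\begin{pmatrix}1&1\\0&1\end{pmatrix}: f_1\mapsto f_1, f_2\mapsto f_1f_2$ and $\begin{pmatrix}1&0\\1&1\end{pmatrix}: f_1\mapsto f_1f_2, f_2\mapsto f_2$). $G:=P\rtimes\mathrm{SL}(P/Z)$; ${}^gy=gyg^{-1}$. *)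

theory Defs
  imports "HOL-Algebra.Group_Action" "HOL-Computational_Algebra.Primes"
begin

text \<open>P = E o C_{p^i}: elements (a,b,z) stand for f1^a f2^b z with
 a,b in {0..<p} and z in C_{p^i} = Z/p^i (written additively).  The relation is
 f2 f1 = f1 f2 c with c = p^(i-1) the generator of the subgroup of order p of Z,
 so E = {(a,b,k*c)} is the extraspecial group of order p^3 and exponent p,
 and Z(E) is amalgamated with the subgroup of order p of C_{p^i}.\<close>

definition Pmul :: "nat \<Rightarrow> nat \<Rightarrow> int \<times> int \<times> int \<Rightarrow> int \<times> int \<times> int \<Rightarrow> int \<times> int \<times> int" where
  "Pmul p i x y = (case x of (a,b,z) \<Rightarrow> case y of (a',b',z') \<Rightarrow>
     ((a + a') mod int p, (b + b') mod int p, (z + z' + int p ^ (i - 1) * (a' * b)) mod (int p ^ i)))"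

definition Pgrp :: "nat \<Rightarrow> nat \<Rightarrow> (int \<times> int \<times> int) monoid" where
  "Pgrp p i = \<lparr>carrier = {0..<int p} \<times> {0..<int p} \<times> {0..<int p ^ i},
               monoid.mult = Pmul p i, one = (0,0,0)\<rparr>"

definition Zsub :: "nat \<Rightarrow> nat \<Rightarrow> (int \<times> int \<times> int) set" where
  "Zsub p i = {(0,0,z) | z. z \<in> {0..<int p ^ i}}"

text \<open>SL(P/Z) = SL_2(F_p): matrices (m11,m12,m21,m22) with entries in {0..<p}, acting on
 coordinate column vectors w.r.t. the basis f1-bar, f2-bar.\<close>

definition SLmul :: "nat \<Rightarrow> int \<times> int \<times> int \<times> int \<Rightarrow> int \<times> int \<times> int \<times> int \<Rightarrow> int \<times> int \<times> int \<times> int" where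
  "SLmul p A B = (case A of (a11,a12,a21,a22) \<Rightarrow> case B of (b11,b12,b21,b22) \<Rightarrow>
     ((a11*b11 + a12*b21) mod int p, (a11*b12 + a12*b22) mod int p,
      (a21*b11 + a22*b21) mod int p, (a21*b12 + a22*b22) mod int p))"

definition SLgrp :: "nat \<Rightarrow> (int \<times> int \<times> int \<times> int) monoid" where
  "SLgrp p = \<lparr>carrier = {(a,b,c,d). a \<in> {0..<int p} \<and> b \<in> {0..<int p} \<and> c \<in> {0..<int p}
                          \<and> d \<in> {0..<int p} \<and> (a*d - b*c) mod int p = 1},
              monoid.mult = SLmul p, one = (1,0,0,1)\<rparr>"

text \<open>The action of SL(P/Z) on P: (v,z) maps to (Mv, z + c*(Q(Mv) - Q(v))) where
 Q(v) = (v1 v2 - v1 - v2)/2 in F_p (p odd, 1/2 = (p+1)/2 mod p).  It fixes Z pointwise,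
 induces the natural action on P/Z, and on the generators it is exactly the one of the
 paper (see lemmas Pact_T_f1 etc. below).\<close>

definition Pact :: "nat \<Rightarrow> nat \<Rightarrow> int \<times> int \<times> int \<times> int \<Rightarrow> int \<times> int \<times> int \<Rightarrow> int \<times> int \<times> int" where
  "Pact p i M x = (case M of (m11,m12,m21,m22) \<Rightarrow> case x of (a,b,z) \<Rightarrow>
     (let w1 = (m11*a + m12*b) mod int p; w2 = (m21*a + m22*b) mod int p in
      (w1, w2, (z + int p ^ (i - 1) * ((int p + 1) div 2) * ((w1*w2 - w1 - w2) - (a*b - a - b)))
                 mod (int p ^ i))))"

definition Ggrp :: "nat \<Rightarrow> nat \<Rightarrow> ((int \<times> int \<times> int) \<times> (int \<times> int \<times> int \<times> int)) monoid" where
  "Ggrp p i = \<lparr>carrier = carrier (Pgrp p i) \<times> carrier (SLgrp p),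
     monoid.mult = (\<lambda>(x,g) (y,h). (Pmul p i x (Pact p i g y), SLmul p g h)),
     one = ((0,0,0),(1,0,0,1))\<rparr>"

definition embP :: "int \<times> int \<times> int \<Rightarrow> (int \<times> int \<times> int) \<times> (int \<times> int \<times> int \<times> int)" where
  "embP x = (x, (1,0,0,1))"

definition embSL :: "(int \<times> int \<times> int \<times> int) set \<Rightarrow> ((int \<times> int \<times> int) \<times> (int \<times> int \<times> int \<times> int)) set" where
  "embSL H = (\<lambda>h. ((0,0,0), h)) ` H"

definition NP :: "nat \<Rightarrow> nat \<Rightarrow> ((int \<times> int \<times> int) \<times> (int \<times> int \<times> int \<times> int)) set \<Rightarrow> (int \<times> int \<times> int) set" where
  "NP p i X = {x \<in> carrier (Pgrp p i). embP x \<in> normalizer (Ggrp p i) X}"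

definition CP :: "nat \<Rightarrow> nat \<Rightarrow> ((int \<times> int \<times> int) \<times> (int \<times> int \<times> int \<times> int)) set \<Rightarrow> (int \<times> int \<times> int) set" where
  "CP p i X = {x \<in> carrier (Pgrp p i). \<forall>s\<in>X. embP x \<otimes>\<^bsub>Ggrp p i\<^esub> s = s \<otimes>\<^bsub>Ggrp p i\<^esub> embP x}"

text \<open>Sanity checks: generators act as in the paper (f1 = (1,0,0), f2 = (0,1,0)).\<close>
lemma Pact_T_f1: "2 \<le> p \<Longrightarrow> Pact p i (1,1,0,1) (1,0,0) = (1,0,0)"
  by (simp add: Pact_def)
lemma Pact_T_f2: "3 \<le> p \<Longrightarrow> Pact p i (1,1,0,1) (0,1,0) = Pmul p i (1,0,0) (0,1,0)"
  by (simp add: Pact_def Pmul_def)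
lemma Pact_L_f1: "3 \<le> p \<Longrightarrow> Pact p i (1,0,1,1) (1,0,0) = Pmul p i (1,0,0) (0,1,0)"
  by (simp add: Pact_def Pmul_def)
lemma Pact_L_f2: "2 \<le> p \<Longrightarrow> Pact p i (1,0,1,1) (0,1,0) = (0,1,0)"
  by (simp add: Pact_def)

end

theory Submission
  imports Defs "HOL-Number_Theory.Cong"
begin

(* In the model of Defs, an element (x, h) of G = P \<rtimes> SL(P/Z) with x in P is
   conjugated by x' in P to (x' x h(x')^-1, h): its SL-component is unchanged.  A set
   S = {(\<psi> h, h) | h \<in> H} is the graph of a map \<psi> : H \<rightarrow> P, so x' normalizes S iff conjugation
   fixes every element of S, i.e. iff x' centralizes S.  Both conditions say that x' lies in
   the "\<psi>-twisted centralizer" {x. \<forall>h\<in>H. x \<psi>(h) = \<psi>(h) h(x)}; for the normalizer this needs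
   h(x^-1) = h(x)^-1, i.e. that SL(P/Z) acts by automorphisms (lemma Pact_mult, which rests on
   a congruence modulo p using det h = 1 and 1/2 = (p+1)/2).  Reading the twisted commutation
   relation in P/Z, which is abelian, forces h(x) = x modulo Z, and the action fixes every
   element fixed modulo Z; so the \<psi>-twisted centralizer lies in the 1-twisted one, which is
   C_P(H).  Since embSL H is the graph of the constant map 1, the theorem follows. *)

text \<open>Rules that propagate a congruence through sums, differences and products, and strip
  reductions modulo the same modulus; with \<open>intro\<close> they replace reduced coordinates by the
  unreduced polynomial expressions they represent.\<close>
lemmas cong_structural = cong_add cong_diff cong_mult cong_mod_leftI cong_mod_rightI cong_refl

text \<open>The centre coordinate lives in \<open>Z/p^i\<close> and the commutator factor \<open>c = p^(i-1)\<close> only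
  sees its argument modulo p.\<close>
lemma scaled_cong:
  fixes p i :: nat and u v :: int
  assumes "1 \<le> i" and "[u = v] (mod int p)"
  shows "[int p ^ (i - 1) * u = int p ^ (i - 1) * v] (mod int p ^ i)"
proof -
  have "int p ^ i = int p ^ (i - 1) * int p"
    using assms(1) power_minus_mult[of i "int p"] by simp
  then show ?thesis
    using assms(2) by (simp add: cong_def mod_mult_mult1)
qed

lemma graph_image_eq_iff:
  "(\<lambda>h. (F h, h)) ` H = (\<lambda>h. (G h, h)) ` H \<longleftrightarrow> (\<forall>h\<in>H. F h = G h)"
  by (auto simp: image_iff)

lemma linear_part_cong:
  fixes p :: nat and m n a b a' b' :: int
  shows "[(m * ((a + a') mod int p) + n * ((b + b') mod int p)) mod int p
          = (m * a + n * b) + (m * a' + n * b')] (mod int p)"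
proof -
  have "[(m * ((a + a') mod int p) + n * ((b + b') mod int p)) mod int p
         = m * (a + a') + n * (b + b')] (mod int p)"
    by (intro cong_structural)
  then show ?thesis by (simp add: algebra_simps)
qed

text \<open>The action corrects the centre coordinate by
  \<open>(Q(Mv) - Q(v))/2\<close> with \<open>Q(s, t) = st - s - t\<close>; this correction converts the commutator
  cocycle \<open>(v, v') \<mapsto> v'_1 v_2\<close> of v into that of Mv exactly when \<open>det M = 1\<close> modulo p.
  The identity is stated for arbitrary representatives modulo p of the coordinates involved.\<close>
lemma quadratic_correction_cong:
  fixes p :: nat and k m11 m12 m21 m22 a b a' b' A B W1 W2 w1 w2 w1' w2' :: int
  defines "u \<equiv> m11 * a + m12 * b" and "v \<equiv> m21 * a + m22 * b"
    and "u' \<equiv> m11 * a' + m12 * b'" and "v' \<equiv> m21 * a' + m22 * b'"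
  assumes two_k: "2 * k = int p + 1" and det: "[m11 * m22 - m12 * m21 = 1] (mod int p)"
    and W1: "[W1 = u + u'] (mod int p)" and W2: "[W2 = v + v'] (mod int p)"
    and A: "[A = a + a'] (mod int p)" and B: "[B = b + b'] (mod int p)"
    and w1: "[w1 = u] (mod int p)" and w2: "[w2 = v] (mod int p)"
    and w1': "[w1' = u'] (mod int p)" and w2': "[w2' = v'] (mod int p)"
  shows "[a' * b + k * ((W1 * W2 - W1 - W2) - (A * B - A - B))
          = k * ((w1 * w2 - w1 - w2) - (a * b - a - b)) + k * ((w1' * w2' - w1' - w2') - (a' * b' - a' - b'))
            + w1' * w2] (mod int p)"
proof -
  let ?lhs = "a' * b + k * (((u + u') * (v + v') - (u + u') - (v + v'))
                           - ((a + a') * (b + b') - (a + a') - (b + b')))"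
  let ?rhs = "k * ((u * v - u - v) - (a * b - a - b)) + k * ((u' * v' - u' - v') - (a' * b' - a' - b'))
              + u' * v"
  have "?lhs - ?rhs = int p * (u' * v - a' * b) + k * (m11 * m22 - m12 * m21 - 1) * (a * b' - a' * b)"
  proof -
    have p_eq: "int p = 2 * k - 1" using two_k by simp
    show ?thesis unfolding u_def v_def u'_def v'_def p_eq by (simp add: algebra_simps)
  qed
  also have "[int p * (u' * v - a' * b) + k * (m11 * m22 - m12 * m21 - 1) * (a * b' - a' * b) = 0]
      (mod int p)"
  proof -
    have "int p dvd m11 * m22 - m12 * m21 - 1" using det by (simp add: cong_iff_dvd_diff)
    then show ?thesis unfolding cong_0_iff by (metis dvd_add dvd_mult dvd_mult2 dvd_triv_left)
  qed
  finally have core: "[?lhs = ?rhs] (mod int p)" by (simp add: cong_diff_iff_cong_0)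
  have "[a' * b + k * ((W1 * W2 - W1 - W2) - (A * B - A - B)) = ?lhs] (mod int p)"
    by (intro W1 W2 A B cong_structural)
  also note core
  also have "[?rhs = k * ((w1 * w2 - w1 - w2) - (a * b - a - b))
      + k * ((w1' * w2' - w1' - w2') - (a' * b' - a' - b')) + w1' * w2] (mod int p)"
    by (intro w1[THEN cong_sym] w2[THEN cong_sym] w1'[THEN cong_sym] w2'[THEN cong_sym] cong_structural)
  finally show ?thesis .
qed

lemma central_part_cong:
  fixes p i :: nat and z z' t k X Y Y' w :: int
  assumes i: "1 \<le> i" and correction: "[t + k * X = k * Y + k * Y' + w] (mod int p)"
  shows "[(z + z' + int p ^ (i - 1) * t) mod int p ^ i + int p ^ (i - 1) * k * X
          = (z + int p ^ (i - 1) * k * Y) mod int p ^ i + (z' + int p ^ (i - 1) * k * Y') mod int p ^ i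
            + int p ^ (i - 1) * w] (mod int p ^ i)"
proof -
  let ?c = "int p ^ (i - 1)" and ?q = "int p ^ i"
  have "[(z + z' + ?c * t) mod ?q + ?c * k * X = (z + z' + ?c * t) + ?c * k * X] (mod ?q)"
    by (intro cong_structural)
  also have "(z + z' + ?c * t) + ?c * k * X = (z + z') + ?c * (t + k * X)"
    by (simp add: algebra_simps)
  also have "[(z + z') + ?c * (t + k * X) = (z + z') + ?c * (k * Y + k * Y' + w)] (mod ?q)"
    by (intro cong_add cong_refl scaled_cong[OF i] correction)
  also have "(z + z') + ?c * (k * Y + k * Y' + w) = (z + ?c * k * Y) + (z' + ?c * k * Y') + ?c * w"
    by (simp add: algebra_simps)
  also have "[\<dots> = (z + ?c * k * Y) mod ?q + (z' + ?c * k * Y') mod ?q + ?c * w] (mod ?q)"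
    by (intro cong_add cong_refl cong_mod_rightI)
  finally show ?thesis .
qed

lemma Pgrp_simps:
  "carrier (Pgrp p i) = {0..<int p} \<times> {0..<int p} \<times> {0..<int p ^ i}"
  "x \<otimes>\<^bsub>Pgrp p i\<^esub> y = Pmul p i x y"
  "\<one>\<^bsub>Pgrp p i\<^esub> = (0, 0, 0)"
  by (simp_all add: Pgrp_def)

lemma Ggrp_simps:
  "carrier (Ggrp p i) = carrier (Pgrp p i) \<times> carrier (SLgrp p)"
  "(x, g) \<otimes>\<^bsub>Ggrp p i\<^esub> (y, h) = (x \<otimes>\<^bsub>Pgrp p i\<^esub> Pact p i g y, SLmul p g h)"
  "\<one>\<^bsub>Ggrp p i\<^esub> = ((0, 0, 0), (1, 0, 0, 1))"
  by (simp_all add: Ggrp_def Pgrp_def)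

text \<open>For \<open>\<psi> = 1\<close> it is the set of fixed points of H, i.e. \<open>C_P(H)\<close>.\<close>
definition twisted_centralizer ::
    "nat \<Rightarrow> nat \<Rightarrow> (int \<times> int \<times> int \<times> int) set \<Rightarrow> (int \<times> int \<times> int \<times> int \<Rightarrow> int \<times> int \<times> int)
     \<Rightarrow> (int \<times> int \<times> int) set" where
  "twisted_centralizer p i H \<psi> = {x \<in> carrier (Pgrp p i).
     \<forall>h\<in>H. x \<otimes>\<^bsub>Pgrp p i\<^esub> \<psi> h = \<psi> h \<otimes>\<^bsub>Pgrp p i\<^esub> Pact p i h x}"

locale extraspecial_model =
  fixes p i :: nat
  assumes odd_p: "odd p" and p_gt_1: "1 < p" and i_pos: "1 \<le> i"
begin

text \<open>Associativity of P: the commutator terms agree because \<open>c = p^(i-1)\<close> only sees them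
  modulo p.\<close>
lemma Pmul_assoc: "Pmul p i (Pmul p i x y) w = Pmul p i x (Pmul p i y w)"
proof -
  obtain a b z a' b' z' a'' b'' z'' where xyw: "x = (a, b, z)" "y = (a', b', z')" "w = (a'', b'', z'')"
    by (metis prod_cases3)
  let ?c = "int p ^ (i - 1)" and ?q = "int p ^ i"
  have "[(z + z' + ?c * (a' * b)) mod ?q + z'' + ?c * (a'' * ((b + b') mod int p))
       = (z + z' + ?c * (a' * b)) + z'' + ?c * (a'' * (b + b'))] (mod ?q)"
    by (intro scaled_cong[OF i_pos] cong_structural)
  also have "(z + z' + ?c * (a' * b)) + z'' + ?c * (a'' * (b + b'))
           = z + (z' + z'' + ?c * (a'' * b')) + ?c * ((a' + a'') * b)"
    by (simp add: algebra_simps)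
  also have "[z + (z' + z'' + ?c * (a'' * b')) + ?c * ((a' + a'') * b)
       = z + (z' + z'' + ?c * (a'' * b')) mod ?q + ?c * (((a' + a'') mod int p) * b)] (mod ?q)"
    by (intro scaled_cong[OF i_pos] cong_structural)
  finally show ?thesis
    by (simp add: xyw Pmul_def cong_def mod_simps add.assoc)
qed

lemma Pgrp_group: "group (Pgrp p i)"
proof (rule groupI)
  let ?c = "int p ^ (i - 1)" and ?q = "int p ^ i"
  show "x \<otimes>\<^bsub>Pgrp p i\<^esub> y \<in> carrier (Pgrp p i)" for x y
    using p_gt_1 by (auto simp: Pgrp_simps Pmul_def split: prod.splits)
  show "\<one>\<^bsub>Pgrp p i\<^esub> \<in> carrier (Pgrp p i)"
    using p_gt_1 by (simp add: Pgrp_simps)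
  show "x \<otimes>\<^bsub>Pgrp p i\<^esub> y \<otimes>\<^bsub>Pgrp p i\<^esub> w = x \<otimes>\<^bsub>Pgrp p i\<^esub> (y \<otimes>\<^bsub>Pgrp p i\<^esub> w)" for x y w
    by (simp add: Pgrp_simps Pmul_assoc)
  show "\<one>\<^bsub>Pgrp p i\<^esub> \<otimes>\<^bsub>Pgrp p i\<^esub> x = x" if "x \<in> carrier (Pgrp p i)" for x
    using that by (auto simp: Pgrp_simps Pmul_def)
  show "\<exists>y\<in>carrier (Pgrp p i). y \<otimes>\<^bsub>Pgrp p i\<^esub> x = \<one>\<^bsub>Pgrp p i\<^esub>"
    if "x \<in> carrier (Pgrp p i)" for x
  proof -
    obtain a b z where x: "x = (a, b, z)" by (metis prod_cases3)
    let ?y = "((- a) mod int p, (- b) mod int p, (- z - ?c * (a * ((- b) mod int p))) mod ?q)"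
    have "?y \<in> carrier (Pgrp p i)" "?y \<otimes>\<^bsub>Pgrp p i\<^esub> x = \<one>\<^bsub>Pgrp p i\<^esub>"
      using p_gt_1 by (simp_all add: x Pgrp_simps Pmul_def mod_simps add.assoc)
    then show ?thesis by blast
  qed
qed

sublocale P: group "Pgrp p i"
  by (rule Pgrp_group)

lemma Pact_closed: "Pact p i h x \<in> carrier (Pgrp p i)"
  using p_gt_1 by (auto simp: Pgrp_simps Pact_def Let_def split: prod.splits)

lemma Pact_identity: "x \<in> carrier (Pgrp p i) \<Longrightarrow> Pact p i (1, 0, 0, 1) x = x"
  by (auto simp: Pgrp_simps Pact_def)

lemma Pact_one: "Pact p i h \<one>\<^bsub>Pgrp p i\<^esub> = \<one>\<^bsub>Pgrp p i\<^esub>"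
  by (auto simp: Pgrp_simps Pact_def split: prod.splits)

lemma Pact_mult:
  assumes "h \<in> carrier (SLgrp p)"
  shows "Pact p i h (x \<otimes>\<^bsub>Pgrp p i\<^esub> y) = Pact p i h x \<otimes>\<^bsub>Pgrp p i\<^esub> Pact p i h y"
proof -
  obtain m11 m12 m21 m22 where h: "h = (m11, m12, m21, m22)" by (metis prod_cases4)
  obtain a b z a' b' z' where xy: "x = (a, b, z)" "y = (a', b', z')" by (metis prod_cases3)
  let ?c = "int p ^ (i - 1)" and ?q = "int p ^ i" and ?k = "(int p + 1) div 2"
  let ?u = "m11 * a + m12 * b" and ?v = "m21 * a + m22 * b"
  let ?u' = "m11 * a' + m12 * b'" and ?v' = "m21 * a' + m22 * b'"
  let ?A = "(a + a') mod int p" and ?B = "(b + b') mod int p"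
  let ?W1 = "(m11 * ?A + m12 * ?B) mod int p" and ?W2 = "(m21 * ?A + m22 * ?B) mod int p"
  let ?E = "\<lambda>s t s0 t0. (s * t - s - t) - (s0 * t0 - s0 - t0)"
  have two_k: "2 * ?k = int p + 1" using odd_p by (auto elim!: oddE)
  have det: "[m11 * m22 - m12 * m21 = 1] (mod int p)"
    using assms p_gt_1 by (simp add: h SLgrp_def cong_def)
  have "[a' * b + ?k * ?E ?W1 ?W2 ?A ?B
      = ?k * ?E (?u mod int p) (?v mod int p) a b + ?k * ?E (?u' mod int p) (?v' mod int p) a' b'
        + (?u' mod int p) * (?v mod int p)] (mod int p)"
    by (rule quadratic_correction_cong[OF two_k det linear_part_cong linear_part_cong]) simp_all
  then have third: "[(z + z' + ?c * (a' * b)) mod ?q + ?c * ?k * ?E ?W1 ?W2 ?A ?B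
      = (z + ?c * ?k * ?E (?u mod int p) (?v mod int p) a b) mod ?q
        + (z' + ?c * ?k * ?E (?u' mod int p) (?v' mod int p) a' b') mod ?q
        + ?c * ((?u' mod int p) * (?v mod int p))] (mod ?q)"
    by (rule central_part_cong[OF i_pos])
  have lhs: "Pact p i h (x \<otimes>\<^bsub>Pgrp p i\<^esub> y)
      = (?W1, ?W2, ((z + z' + ?c * (a' * b)) mod ?q + ?c * ?k * ?E ?W1 ?W2 ?A ?B) mod ?q)"
    by (simp add: h xy Pgrp_simps Pmul_def Pact_def Let_def)
  have rhs: "Pact p i h x \<otimes>\<^bsub>Pgrp p i\<^esub> Pact p i h y
      = ((?u mod int p + ?u' mod int p) mod int p, (?v mod int p + ?v' mod int p) mod int p,
         ((z + ?c * ?k * ?E (?u mod int p) (?v mod int p) a b) mod ?q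
          + (z' + ?c * ?k * ?E (?u' mod int p) (?v' mod int p) a' b') mod ?q
          + ?c * ((?u' mod int p) * (?v mod int p))) mod ?q)"
    by (simp add: h xy Pgrp_simps Pmul_def Pact_def Let_def)
  have "?W1 = (?u mod int p + ?u' mod int p) mod int p"
    and "?W2 = (?v mod int p + ?v' mod int p) mod int p"
    using linear_part_cong[of m11 a a' p m12 b b'] linear_part_cong[of m21 a a' p m22 b b']
    by (simp_all add: cong_def mod_simps)
  then show ?thesis
    unfolding lhs rhs prod.inject using third[unfolded cong_def] by blast
qed

lemma Pact_inv:
  assumes "h \<in> carrier (SLgrp p)" and "x \<in> carrier (Pgrp p i)"
  shows "Pact p i h (inv\<^bsub>Pgrp p i\<^esub> x) = inv\<^bsub>Pgrp p i\<^esub> (Pact p i h x)"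
proof (rule sym, rule P.inv_equality)
  show "Pact p i h (inv\<^bsub>Pgrp p i\<^esub> x) \<otimes>\<^bsub>Pgrp p i\<^esub> Pact p i h x = \<one>\<^bsub>Pgrp p i\<^esub>"
    using assms by (simp flip: Pact_mult add: Pact_one)
qed (rule Pact_closed)+

text \<open>Rigidity: the correction term vanishes when the image in \<open>P/Z\<close> (the first two
  coordinates) is fixed, so an element fixed modulo Z is fixed.\<close>
lemma Pact_fixed_if_fixed_mod_centre:
  assumes "x \<in> carrier (Pgrp p i)"
    and "fst (Pact p i h x) = fst x" and "fst (snd (Pact p i h x)) = fst (snd x)"
  shows "Pact p i h x = x"
proof -
  obtain a b z where x: "x = (a, b, z)" by (metis prod_cases3)
  obtain m11 m12 m21 m22 where h: "h = (m11, m12, m21, m22)" by (metis prod_cases4)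
  show ?thesis
    using assms by (simp add: x h Pact_def Let_def Pgrp_simps)
qed

text \<open>Since \<open>P/Z\<close> is abelian, a twisted commutation \<open>x f = f h(x)\<close> forces
  \<open>h(x) = x\<close> modulo Z, hence \<open>h(x) = x\<close>.\<close>
lemma twisted_commutation_fixes:
  assumes x: "x \<in> carrier (Pgrp p i)" and f: "f \<in> carrier (Pgrp p i)"
    and comm: "x \<otimes>\<^bsub>Pgrp p i\<^esub> f = f \<otimes>\<^bsub>Pgrp p i\<^esub> Pact p i h x"
  shows "Pact p i h x = x"
proof (rule Pact_fixed_if_fixed_mod_centre[OF x])
  obtain a b z where x_eq: "x = (a, b, z)" by (metis prod_cases3)
  obtain fa fb fz where f_eq: "f = (fa, fb, fz)" by (metis prod_cases3)
  obtain w1 w2 w3 where w_eq: "Pact p i h x = (w1, w2, w3)" by (metis prod_cases3)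
  have w: "(w1, w2, w3) \<in> carrier (Pgrp p i)" using Pact_closed w_eq by metis
  have "[fa + a = fa + w1] (mod int p)" "[fb + b = fb + w2] (mod int p)"
    using comm unfolding w_eq by (simp_all add: x_eq f_eq Pgrp_simps Pmul_def cong_def add.commute)
  then have "[a = w1] (mod int p)" "[b = w2] (mod int p)"
    by (simp_all add: cong_add_lcancel)
  then have "a = w1" "b = w2"
    using x w by (auto simp: x_eq Pgrp_simps intro: cong_less_imp_eq_int)
  then show "fst (Pact p i h x) = fst x" "fst (snd (Pact p i h x)) = fst (snd x)"
    unfolding w_eq by (simp_all add: x_eq)
qed

lemma SL_one_closed: "(1, 0, 0, 1) \<in> carrier (SLgrp p)"
  using p_gt_1 by (simp add: SLgrp_def)

lemma SL_one_mult:
  assumes "g \<in> carrier (SLgrp p)"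
  shows "SLmul p (1, 0, 0, 1) g = g" and "SLmul p g (1, 0, 0, 1) = g"
  using assms by (auto simp: SLgrp_def SLmul_def)

text \<open>Inverses of elements of P computed in G; G is not shown to be a group, so the inverse is
  identified directly from the definition of \<open>inv\<close>.\<close>
lemma Ginv_embP:
  assumes x: "x \<in> carrier (Pgrp p i)"
  shows "inv\<^bsub>Ggrp p i\<^esub> (embP x) = embP (inv\<^bsub>Pgrp p i\<^esub> x)"
  unfolding m_inv_def[of "Ggrp p i"]
proof (rule the_equality)
  show "embP (inv\<^bsub>Pgrp p i\<^esub> x) \<in> carrier (Ggrp p i)
      \<and> embP x \<otimes>\<^bsub>Ggrp p i\<^esub> embP (inv\<^bsub>Pgrp p i\<^esub> x) = \<one>\<^bsub>Ggrp p i\<^esub>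
      \<and> embP (inv\<^bsub>Pgrp p i\<^esub> x) \<otimes>\<^bsub>Ggrp p i\<^esub> embP x = \<one>\<^bsub>Ggrp p i\<^esub>"
    using x SL_one_closed SL_one_mult[OF SL_one_closed]
    by (simp add: embP_def Ggrp_simps Pact_identity Pgrp_simps(3))
  fix y assume "y \<in> carrier (Ggrp p i) \<and> embP x \<otimes>\<^bsub>Ggrp p i\<^esub> y = \<one>\<^bsub>Ggrp p i\<^esub>
      \<and> y \<otimes>\<^bsub>Ggrp p i\<^esub> embP x = \<one>\<^bsub>Ggrp p i\<^esub>"
  moreover obtain y1 g where y: "y = (y1, g)" by (metis surj_pair)
  ultimately have y1: "y1 \<in> carrier (Pgrp p i)" and g: "g \<in> carrier (SLgrp p)"
    and right_inv: "x \<otimes>\<^bsub>Pgrp p i\<^esub> y1 = \<one>\<^bsub>Pgrp p i\<^esub>"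
    and "SLmul p (1, 0, 0, 1) g = (1, 0, 0, 1)"
    by (auto simp: embP_def Ggrp_simps Pact_identity Pgrp_simps(3))
  moreover have "y1 = inv\<^bsub>Pgrp p i\<^esub> x"
    using x y1 right_inv by (metis P.inv_comm P.inv_equality)
  ultimately show "y = embP (inv\<^bsub>Pgrp p i\<^esub> x)"
    by (simp add: y embP_def SL_one_mult)
qed

lemma conj_embP:
  assumes "x \<in> carrier (Pgrp p i)" "f \<in> carrier (Pgrp p i)" "h \<in> carrier (SLgrp p)"
  shows "embP x \<otimes>\<^bsub>Ggrp p i\<^esub> (f, h) \<otimes>\<^bsub>Ggrp p i\<^esub> inv\<^bsub>Ggrp p i\<^esub> (embP x)
         = (x \<otimes>\<^bsub>Pgrp p i\<^esub> f \<otimes>\<^bsub>Pgrp p i\<^esub> inv\<^bsub>Pgrp p i\<^esub> (Pact p i h x), h)"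
  using assms unfolding Ginv_embP[OF assms(1)]
  by (simp add: embP_def Ggrp_simps Pact_identity Pact_inv SL_one_mult)

lemma commute_embP:
  assumes "x \<in> carrier (Pgrp p i)" "f \<in> carrier (Pgrp p i)" "h \<in> carrier (SLgrp p)"
  shows "embP x \<otimes>\<^bsub>Ggrp p i\<^esub> (f, h) = (f, h) \<otimes>\<^bsub>Ggrp p i\<^esub> embP x
         \<longleftrightarrow> x \<otimes>\<^bsub>Pgrp p i\<^esub> f = f \<otimes>\<^bsub>Pgrp p i\<^esub> Pact p i h x"
  using assms by (simp add: embP_def Ggrp_simps Pact_identity SL_one_mult)

lemma CP_graph:
  assumes "H \<subseteq> carrier (SLgrp p)" and "\<psi> ` H \<subseteq> carrier (Pgrp p i)"
  shows "CP p i ((\<lambda>h. (\<psi> h, h)) ` H) = twisted_centralizer p i H \<psi>"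
proof -
  have "embP x \<otimes>\<^bsub>Ggrp p i\<^esub> (\<psi> h, h) = (\<psi> h, h) \<otimes>\<^bsub>Ggrp p i\<^esub> embP x
        \<longleftrightarrow> x \<otimes>\<^bsub>Pgrp p i\<^esub> \<psi> h = \<psi> h \<otimes>\<^bsub>Pgrp p i\<^esub> Pact p i h x"
    if "x \<in> carrier (Pgrp p i)" "h \<in> H" for x h
    using that assms by (intro commute_embP) auto
  then show ?thesis by (auto simp: CP_def twisted_centralizer_def)
qed

text \<open>An element of P normalizes a graph iff it fixes each point of it under conjugation,
  since conjugation preserves the SL-component; with \<open>h(x^-1) = h(x)^-1\<close> this is again
  the twisted commutation relation.\<close>
lemma NP_graph:
  assumes H: "H \<subseteq> carrier (SLgrp p)" and \<psi>: "\<psi> ` H \<subseteq> carrier (Pgrp p i)"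
  shows "NP p i ((\<lambda>h. (\<psi> h, h)) ` H) = twisted_centralizer p i H \<psi>"
proof -
  let ?S = "(\<lambda>h. (\<psi> h, h)) ` H"
  have "embP x \<in> normalizer (Ggrp p i) ?S \<longleftrightarrow> x \<in> twisted_centralizer p i H \<psi>"
    if x: "x \<in> carrier (Pgrp p i)" for x
  proof -
    let ?conj = "\<lambda>s. embP x \<otimes>\<^bsub>Ggrp p i\<^esub> s \<otimes>\<^bsub>Ggrp p i\<^esub> inv\<^bsub>Ggrp p i\<^esub> (embP x)"
    have "embP x <#\<^bsub>Ggrp p i\<^esub> ?S #>\<^bsub>Ggrp p i\<^esub> inv\<^bsub>Ggrp p i\<^esub> (embP x) = ?conj ` ?S"
      unfolding l_coset_def r_coset_def by blast
    also have "\<dots> = (\<lambda>h. (x \<otimes>\<^bsub>Pgrp p i\<^esub> \<psi> h \<otimes>\<^bsub>Pgrp p i\<^esub> inv\<^bsub>Pgrp p i\<^esub> (Pact p i h x), h)) ` H"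
      unfolding image_image using x H \<psi> by (intro image_cong refl conj_embP) auto
    finally have "embP x \<in> normalizer (Ggrp p i) ?S \<longleftrightarrow>
        (\<forall>h\<in>H. x \<otimes>\<^bsub>Pgrp p i\<^esub> \<psi> h \<otimes>\<^bsub>Pgrp p i\<^esub> inv\<^bsub>Pgrp p i\<^esub> (Pact p i h x) = \<psi> h)"
      using x H \<psi> SL_one_closed
      by (auto simp: normalizer_def stabilizer_def embP_def Ggrp_simps graph_image_eq_iff)
    also have "\<dots> \<longleftrightarrow> x \<in> twisted_centralizer p i H \<psi>"
    proof -
      have "x \<otimes>\<^bsub>Pgrp p i\<^esub> \<psi> h \<otimes>\<^bsub>Pgrp p i\<^esub> inv\<^bsub>Pgrp p i\<^esub> (Pact p i h x) = \<psi> h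
          \<longleftrightarrow> x \<otimes>\<^bsub>Pgrp p i\<^esub> \<psi> h = \<psi> h \<otimes>\<^bsub>Pgrp p i\<^esub> Pact p i h x" if "h \<in> H" for h
        using that x \<psi> by (intro P.inv_solve_right') (auto simp: Pact_closed)
      then show ?thesis using x by (auto simp: twisted_centralizer_def)
    qed
    finally show ?thesis .
  qed
  then show ?thesis
    by (auto simp: NP_def twisted_centralizer_def)
qed

lemma twisted_centralizer_fixed:
  assumes "\<psi> ` H \<subseteq> carrier (Pgrp p i)"
  shows "twisted_centralizer p i H \<psi> \<subseteq> twisted_centralizer p i H (\<lambda>_. \<one>\<^bsub>Pgrp p i\<^esub>)"
proof (rule subsetI)
  fix x assume "x \<in> twisted_centralizer p i H \<psi>"
  then have x: "x \<in> carrier (Pgrp p i)"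
    and comm: "\<And>h. h \<in> H \<Longrightarrow> x \<otimes>\<^bsub>Pgrp p i\<^esub> \<psi> h = \<psi> h \<otimes>\<^bsub>Pgrp p i\<^esub> Pact p i h x"
    by (auto simp: twisted_centralizer_def)
  have "Pact p i h x = x" if "h \<in> H" for h
    using twisted_commutation_fixes[OF x _ comm[OF that]] assms that by blast
  then show "x \<in> twisted_centralizer p i H (\<lambda>_. \<one>\<^bsub>Pgrp p i\<^esub>)"
    using x by (simp add: twisted_centralizer_def)
qed

end

theorem mainTheorem14:
  fixes p i :: nat
    and H :: "(int \<times> int \<times> int \<times> int) set"
    and \<phi> :: "int \<times> int \<times> int \<times> int \<Rightarrow> int \<times> int \<times> int"
  assumes "prime p" and "odd p" and "1 \<le> i"
    and "subgroup H (SLgrp p)"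
    and "\<forall>h\<in>H. \<phi> h \<in> carrier (Pgrp p i)"
    and "\<forall>h\<in>H. \<forall>k\<in>H. \<phi> (h \<otimes>\<^bsub>SLgrp p\<^esub> k) = \<phi> h \<otimes>\<^bsub>Pgrp p i\<^esub> Pact p i h (\<phi> k)"
  shows "let S = (\<lambda>h. (\<phi> h, h)) ` H in
         NP p i S = CP p i S \<and> CP p i S \<subseteq> CP p i (embSL H)
         \<and> CP p i (embSL H) = NP p i (embSL H)"
proof -
  interpret extraspecial_model p i
    using assms(1-3) prime_gt_1_nat by unfold_locales
  have H: "H \<subseteq> carrier (SLgrp p)" using assms(4) by (rule subgroup.subset)
  have \<phi>: "\<phi> ` H \<subseteq> carrier (Pgrp p i)" using assms(5) by blast
  have one: "(\<lambda>_. \<one>\<^bsub>Pgrp p i\<^esub>) ` H \<subseteq> carrier (Pgrp p i)" by auto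
  have embSL: "embSL H = (\<lambda>h. (\<one>\<^bsub>Pgrp p i\<^esub>, h)) ` H" by (simp add: embSL_def Pgrp_simps)
  show ?thesis
    unfolding Let_def embSL CP_graph[OF H \<phi>] NP_graph[OF H \<phi>] CP_graph[OF H one] NP_graph[OF H one]
    using twisted_centralizer_fixed[OF \<phi>] by blast
qed

end
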